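(* Let $(G,\cdot)$ be a group and let $\psi\in\operatorname{End}(G,\cdot)$. Consider the subset $$N=\{\,\nu(g) : g\in G\,\},\qquad \nu(g)\colon h\mapsto g\cdot\psi(g)^{-1}\cdot h\cdot\psi(g),$$ of $\operatorname{Perm}(G)$. The following are equivalent: (a) $N$ is a subgroup of $\operatorname{Perm}(G)$; (b) $N$ is normalised by $\lambda(G)$; (c) $N$ is a regular subgroup of $\operatorname{Perm}(G)$ which normalises, and is normalised by, $\lambda(G)$; (d) $\psi([[G,\psi],G])\le Z(G,\cdot)$; (e) $(G,\cdot,\circ)$ is a bi-skew brace, where $g\circ h=g\cdot\psi(g)^{-1}\cdot h\cdot\psi(g)$ for all $g,h\in G$.
   Context: $\operatorname{Perm}(G)$ denotes the group of all permutations of the underlying set of $G$, and $\lambda\colon G\to\operatorname{Perm}(G)$, $\lambda(g)(h)=g\cdot h$, is the left regular representation. A subset $N\subseteq\operatorname{Perm}(G)$ is regular if the map $N\to G$, $\eta\mapsto\eta(1)$, is a bijection. "$N$ normalises $\lambda(G)$" means $\eta\lambda(G)\eta^{-1}=\lambda(G)$ for all $\eta\in N$; "$N$ is normalised by $\lambda(G)$" means $\lambda(g)N\lambda(g)^{-1}=N$ for all $g\in G$. For $\psi\in\operatorname{End}(G,\cdot)$ and $g\in G$, write $[g,\psi]=g\cdot\psi(g)^{-1}$, and $[G,\psi]$ for the subgroup generated by all $[g,\psi]$, $g\in G$. Commutators are $[x,y]=xyx^{-1}y^{-1}$, and for subgroups $A,B$, $[A,B]$ is the subgroup generated by all $[a,b]$,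 $a\in A,b\in B$. $Z(G,\cdot)$ is the centre. A skew (left) brace is a triple $(G,\cdot,\circ)$ where $(G,\cdot)$ and $(G,\circ)$ are groups and $g\circ(h\cdot k)=(g\circ h)\cdot g^{-1}\cdot(g\circ k)$ for all $g,h,k$ (with $g^{-1}$ the inverse in $(G,\cdot)$). A bi-skew brace is a triple $(G,\cdot,\circ)$ such that both $(G,\cdot,\circ)$ and $(G,\circ,\cdot)$ are skew braces. *)

theory Defs
  imports "HOL-Algebra.Algebra"
begin

definition centre :: "('a, 'b) monoid_scheme \<Rightarrow> 'a set" where
  "centre G = {z \<in> carrier G. \<forall>x \<in> carrier G. z \<otimes>\<^bsub>G\<^esub> x = x \<otimes>\<^bsub>G\<^esub> z}"

definition comm_subgroup :: "('a, 'b) monoid_scheme \<Rightarrow> 'a set \<Rightarrow> 'a set \<Rightarrow> 'a set" where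
  "comm_subgroup G A B = generate G
     {a \<otimes>\<^bsub>G\<^esub> b \<otimes>\<^bsub>G\<^esub> inv\<^bsub>G\<^esub> a \<otimes>\<^bsub>G\<^esub> inv\<^bsub>G\<^esub> b | a b. a \<in> A \<and> b \<in> B}"

definition psi_comm :: "('a, 'b) monoid_scheme \<Rightarrow> ('a \<Rightarrow> 'a) \<Rightarrow> 'a set" where
  "psi_comm G \<psi> = generate G {g \<otimes>\<^bsub>G\<^esub> inv\<^bsub>G\<^esub> (\<psi> g) | g. g \<in> carrier G}"

text \<open>Left regular representation, as an element of Perm(G) = BijGroup (carrier G).\<close>
definition lreg :: "('a, 'b) monoid_scheme \<Rightarrow> 'a \<Rightarrow> ('a \<Rightarrow> 'a)" where
  "lreg G g = (\<lambda>h \<in> carrier G. g \<otimes>\<^bsub>G\<^esub> h)"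

definition nu :: "('a, 'b) monoid_scheme \<Rightarrow> ('a \<Rightarrow> 'a) \<Rightarrow> 'a \<Rightarrow> ('a \<Rightarrow> 'a)" where
  "nu G \<psi> g = (\<lambda>h \<in> carrier G. g \<otimes>\<^bsub>G\<^esub> inv\<^bsub>G\<^esub> (\<psi> g) \<otimes>\<^bsub>G\<^esub> h \<otimes>\<^bsub>G\<^esub> \<psi> g)"

definition regular_perm :: "('a, 'b) monoid_scheme \<Rightarrow> ('a \<Rightarrow> 'a) set \<Rightarrow> bool" where
  "regular_perm G N \<longleftrightarrow> bij_betw (\<lambda>\<eta>. \<eta> \<one>\<^bsub>G\<^esub>) N (carrier G)"

definition normalises_lreg :: "('a, 'b) monoid_scheme \<Rightarrow> ('a \<Rightarrow> 'a) set \<Rightarrow> bool" where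
  "normalises_lreg G N \<longleftrightarrow>
     (\<forall>\<eta> \<in> N. (\<lambda>x. \<eta> \<otimes>\<^bsub>BijGroup (carrier G)\<^esub> x \<otimes>\<^bsub>BijGroup (carrier G)\<^esub> inv\<^bsub>BijGroup (carrier G)\<^esub> \<eta>)
                 ` (lreg G ` carrier G) = lreg G ` carrier G)"

definition normalised_by_lreg :: "('a, 'b) monoid_scheme \<Rightarrow> ('a \<Rightarrow> 'a) set \<Rightarrow> bool" where
  "normalised_by_lreg G N \<longleftrightarrow>
     (\<forall>g \<in> carrier G. (\<lambda>x. lreg G g \<otimes>\<^bsub>BijGroup (carrier G)\<^esub> x \<otimes>\<^bsub>BijGroup (carrier G)\<^esub> inv\<^bsub>BijGroup (carrier G)\<^esub> (lreg G g))
                 ` N = N)"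

definition skew_brace :: "'a monoid \<Rightarrow> 'a monoid \<Rightarrow> bool" where
  "skew_brace A B \<longleftrightarrow> group A \<and> group B \<and> carrier A = carrier B \<and>
     (\<forall>g \<in> carrier A. \<forall>h \<in> carrier A. \<forall>k \<in> carrier A.
        g \<otimes>\<^bsub>B\<^esub> (h \<otimes>\<^bsub>A\<^esub> k) = (g \<otimes>\<^bsub>B\<^esub> h) \<otimes>\<^bsub>A\<^esub> inv\<^bsub>A\<^esub> g \<otimes>\<^bsub>A\<^esub> (g \<otimes>\<^bsub>B\<^esub> k))"

definition bi_skew_brace :: "'a monoid \<Rightarrow> 'a monoid \<Rightarrow> bool" where
  "bi_skew_brace A B \<longleftrightarrow> skew_brace A B \<and> skew_brace B A"

definition circ_struct :: "'a monoid \<Rightarrow> ('a \<Rightarrow> 'a) \<Rightarrow> 'a \<Rightarrow> 'a monoid" where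
  "circ_struct G \<psi> e = \<lparr>carrier = carrier G,
     monoid.mult = (\<lambda>g h. g \<otimes>\<^bsub>G\<^esub> inv\<^bsub>G\<^esub> (\<psi> g) \<otimes>\<^bsub>G\<^esub> h \<otimes>\<^bsub>G\<^esub> \<psi> g), monoid.one = e\<rparr>"

end

theory Submission
  imports Defs
begin

(* Everything is equivalent to the single condition that psi maps every commutator
   [g psi(g)^-1, h] into the centre. Write g o h = g psi(g)^-1 h psi(g). Both (g o h) o x
   and g o (h o x) are g o h times a conjugate of x, by psi(g o h) and by psi(h) psi(g)
   respectively, and the quotient of these conjugators is the commutator
   [psi(g psi(g)^-1), psi(h)]; so o is associative exactly under the condition, and then
   (G, o) is a group with inverse psi(g) g^-1 psi(g)^-1. The permutation nu(g) is left
   o-multiplication by g and nu(g)(1) = g, so N is closed under products iff o is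
   associative; conjugating nu(g) by lambda(x) gives a map of the same shape that is in N
   iff a commutator of the same kind is central; and the condition spreads from the
   generators to psi([[G,psi],G]) because the elements u with [u, psi(G)] central form a
   subgroup. *)

section \<open>Centre and commutators\<close>

lemma (in group) mult_inv_cancel_left [simp]:
  "x \<in> carrier G \<Longrightarrow> y \<in> carrier G \<Longrightarrow> x \<otimes> (inv x \<otimes> y) = y"
  by (simp add: m_assoc[symmetric])

lemma (in group) inv_mult_cancel_left [simp]:
  "x \<in> carrier G \<Longrightarrow> y \<in> carrier G \<Longrightarrow> inv x \<otimes> (x \<otimes> y) = y"
  by (simp add: m_assoc[symmetric])

lemma centreI:
  "z \<in> carrier G \<Longrightarrow> (\<And>x. x \<in> carrier G \<Longrightarrow> z \<otimes>\<^bsub>G\<^esub> x = x \<otimes>\<^bsub>G\<^esub> z) \<Longrightarrow> z \<in> centre G"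
  by (simp add: centre_def)

lemma centreD:
  assumes "z \<in> centre G"
  shows centre_carrier: "z \<in> carrier G"
    and centre_commute: "x \<in> carrier G \<Longrightarrow> z \<otimes>\<^bsub>G\<^esub> x = x \<otimes>\<^bsub>G\<^esub> z"
  using assms by (simp_all add: centre_def)

lemma (in group) centre_subgroup: "subgroup (centre G) G"
proof (rule subgroupI)
  show "centre G \<subseteq> carrier G" using centre_carrier[of _ G] by blast
  have "\<one> \<in> centre G" by (rule centreI) simp_all
  then show "centre G \<noteq> {}" by blast
next
  fix z assume z: "z \<in> centre G"
  note zc = centre_carrier[OF z]
  show "inv z \<in> centre G"
  proof (rule centreI)
    fix x assume x: "x \<in> carrier G"
    have "inv z \<otimes> x = inv z \<otimes> (x \<otimes> z) \<otimes> inv z" using zc x by (simp add: m_assoc)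
    also have "\<dots> = inv z \<otimes> (z \<otimes> x) \<otimes> inv z" using centre_commute[OF z x] by simp
    also have "\<dots> = x \<otimes> inv z" using zc x by (simp add: m_assoc[symmetric])
    finally show "inv z \<otimes> x = x \<otimes> inv z" .
  qed (simp add: zc)
next
  fix z w assume z: "z \<in> centre G" and w: "w \<in> centre G"
  note zc = centre_carrier[OF z] and wc = centre_carrier[OF w]
  show "z \<otimes> w \<in> centre G"
  proof (rule centreI)
    fix x assume x: "x \<in> carrier G"
    have "z \<otimes> w \<otimes> x = z \<otimes> (x \<otimes> w)" using zc wc x centre_commute[OF w x] by (simp add: m_assoc)
    also have "\<dots> = x \<otimes> z \<otimes> w" using zc wc x centre_commute[OF z x] by (simp add: m_assoc[symmetric])
    also have "\<dots> = x \<otimes> (z \<otimes> w)" using zc wc x by (simp add: m_assoc)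
    finally show "z \<otimes> w \<otimes> x = x \<otimes> (z \<otimes> w)" .
  qed (simp add: zc wc)
qed

lemma (in group) mult_cancel_both:
  assumes "u \<in> carrier G" "v \<in> carrier G" "b \<in> carrier G" "c \<in> carrier G"
  shows "b \<otimes> u \<otimes> c = b \<otimes> v \<otimes> c \<longleftrightarrow> u = v"
  using assms by simp

lemma (in group) conj_eq_iff_centre:
  assumes a: "a \<in> carrier G" and b: "b \<in> carrier G"
  shows "(\<forall>x\<in>carrier G. inv a \<otimes> x \<otimes> a = inv b \<otimes> x \<otimes> b) \<longleftrightarrow> b \<otimes> inv a \<in> centre G"
proof -
  have "inv a \<otimes> x \<otimes> a = inv b \<otimes> x \<otimes> b \<longleftrightarrow> b \<otimes> inv a \<otimes> x = x \<otimes> (b \<otimes> inv a)"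
    if x: "x \<in> carrier G" for x
  proof -
    have "inv a \<otimes> x \<otimes> a = inv b \<otimes> x \<otimes> b \<longleftrightarrow>
        b \<otimes> (inv a \<otimes> x \<otimes> a) \<otimes> inv a = b \<otimes> (inv b \<otimes> x \<otimes> b) \<otimes> inv a"
      using a b x by (intro mult_cancel_both[symmetric]) auto
    also have "\<dots> \<longleftrightarrow> b \<otimes> inv a \<otimes> x = x \<otimes> (b \<otimes> inv a)"
      using a b x by (simp add: m_assoc)
    finally show ?thesis .
  qed
  then show ?thesis using a b by (auto intro: centreI dest: centre_commute)
qed

definition (in group) commutator :: "'a \<Rightarrow> 'a \<Rightarrow> 'a" where
  "commutator x y = x \<otimes> y \<otimes> inv x \<otimes> inv y"

lemma (in group) inv_commutator:
  "x \<in> carrier G \<Longrightarrow> y \<in> carrier G \<Longrightarrow> inv (commutator x y) = commutator y x"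
  by (simp add: commutator_def inv_mult_group m_assoc)

lemma (in group) commutator_in_centre_swap:
  "x \<in> carrier G \<Longrightarrow> y \<in> carrier G \<Longrightarrow>
   commutator x y \<in> centre G \<longleftrightarrow> commutator y x \<in> centre G"
  by (metis inv_commutator subgroup.m_inv_closed[OF centre_subgroup])

lemma (in group) commutator_one_left [simp]: "y \<in> carrier G \<Longrightarrow> commutator \<one> y = \<one>"
  by (simp add: commutator_def)

lemma (in group) commutator_mult_left:
  "x \<in> carrier G \<Longrightarrow> x' \<in> carrier G \<Longrightarrow> y \<in> carrier G \<Longrightarrow>
   commutator (x \<otimes> x') y = x \<otimes> commutator x' y \<otimes> inv x \<otimes> commutator x y"
  by (simp add: commutator_def inv_mult_group m_assoc)

lemma (in group) commutator_inv_left: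
  "x \<in> carrier G \<Longrightarrow> y \<in> carrier G \<Longrightarrow>
   commutator (inv x) y = inv x \<otimes> inv (commutator x y) \<otimes> x"
  by (simp add: commutator_def inv_mult_group m_assoc)

lemma (in group) centre_conj:
  "z \<in> centre G \<Longrightarrow> x \<in> carrier G \<Longrightarrow> x \<otimes> z \<otimes> inv x = z"
  by (simp add: centre_carrier centre_commute[of z G "inv x"] m_assoc)

lemma (in group) central_commutators_subgroup:
  assumes "V \<subseteq> carrier G"
  shows "subgroup {u \<in> carrier G. \<forall>v\<in>V. commutator u v \<in> centre G} G"
proof (rule subgroupI)
  interpret Z: subgroup "centre G" G by (rule centre_subgroup)
  show "{u \<in> carrier G. \<forall>v\<in>V. commutator u v \<in> centre G} \<noteq> {}"
    using assms by (auto intro!: exI[of _ \<one>])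
  fix x x' assume x: "x \<in> {u \<in> carrier G. \<forall>v\<in>V. commutator u v \<in> centre G}"
    and x': "x' \<in> {u \<in> carrier G. \<forall>v\<in>V. commutator u v \<in> centre G}"
  have "commutator (x \<otimes> x') v \<in> centre G" if v: "v \<in> V" for v
  proof -
    have "commutator (x \<otimes> x') v = commutator x' v \<otimes> commutator x v"
      using x x' v assms by (auto simp: commutator_mult_left centre_conj)
    then show ?thesis using x x' v by auto
  qed
  then show "x \<otimes> x' \<in> {u \<in> carrier G. \<forall>v\<in>V. commutator u v \<in> centre G}"
    using x x' by auto
  have "commutator (inv x) v \<in> centre G" if v: "v \<in> V" for v
  proof -
    have "inv (commutator x v) \<in> centre G" using x v by auto
    moreover have "commutator (inv x) v = inv (commutator x v)"
      using centre_conj[OF calculation, of "inv x"] x v assms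
      by (auto simp: commutator_inv_left)
    ultimately show ?thesis by simp
  qed
  then show "inv x \<in> {u \<in> carrier G. \<forall>v\<in>V. commutator u v \<in> centre G}"
    using x by auto
qed auto

lemma (in group_hom) subgroup_vimage:
  assumes "subgroup K H"
  shows "subgroup (h -` K \<inter> carrier G) G"
proof (rule G.subgroupI)
  interpret K: subgroup K H by (rule assms)
  have "\<one> \<in> h -` K \<inter> carrier G" by simp
  then show "h -` K \<inter> carrier G \<noteq> {}" by blast
next
  fix a b assume "a \<in> h -` K \<inter> carrier G" "b \<in> h -` K \<inter> carrier G"
  then show "a \<otimes> b \<in> h -` K \<inter> carrier G"
    using subgroup.m_closed[OF assms] by simp
next
  fix a assume "a \<in> h -` K \<inter> carrier G"
  then show "inv a \<in> h -` K \<inter> carrier G"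
    using subgroup.m_inv_closed[OF assms] by simp
qed blast

section \<open>Permutations of the carrier\<close>

lemma Bij_restrictI:
  assumes "\<And>x. x \<in> S \<Longrightarrow> f x \<in> S" "\<And>x. x \<in> S \<Longrightarrow> g x \<in> S"
    and "\<And>x. x \<in> S \<Longrightarrow> g (f x) = x" "\<And>x. x \<in> S \<Longrightarrow> f (g x) = x"
  shows "(\<lambda>x\<in>S. f x) \<in> Bij S"
proof -
  have "bij_betw (\<lambda>x\<in>S. f x) S S"
    by (rule bij_betwI[where g = g]) (use assms in auto)
  then show ?thesis by (simp add: Bij_def)
qed

lemma carrier_BijGroup [simp]: "carrier (BijGroup S) = Bij S"
  by (simp add: BijGroup_def)

lemma BijGroup_mult_eq:
  "f \<in> Bij S \<Longrightarrow> g \<in> Bij S \<Longrightarrow> f \<otimes>\<^bsub>BijGroup S\<^esub> g = (\<lambda>x\<in>S. f (g x))"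
  by (simp add: BijGroup_def compose_def)

lemma (in group) lreg_Bij: "g \<in> carrier G \<Longrightarrow> lreg G g \<in> Bij (carrier G)"
  unfolding lreg_def by (rule Bij_restrictI[where g = "\<lambda>y. inv g \<otimes> y"]) auto

lemma (in group) lreg_hom: "lreg G \<in> hom G (BijGroup (carrier G))"
proof (rule homI)
  fix g h assume "g \<in> carrier G" "h \<in> carrier G"
  then show "lreg G (g \<otimes> h) = lreg G g \<otimes>\<^bsub>BijGroup (carrier G)\<^esub> lreg G h"
    by (simp add: BijGroup_mult_eq lreg_Bij) (simp add: lreg_def m_assoc cong: restrict_cong)
qed (simp add: lreg_Bij)

lemma (in group) group_hom_lreg: "group_hom G (BijGroup (carrier G)) (lreg G)"
  by (simp add: group_hom_def group_hom_axioms_def is_group group_BijGroup lreg_hom)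

lemma (in group) conj_image_eq_if_subset:
  assumes K: "subgroup K G" and A: "A \<subseteq> carrier G"
    and sub: "\<And>a. a \<in> K \<Longrightarrow> (\<lambda>x. a \<otimes> x \<otimes> inv a) ` A \<subseteq> A" and a: "a \<in> K"
  shows "(\<lambda>x. a \<otimes> x \<otimes> inv a) ` A = A"
proof
  show "(\<lambda>x. a \<otimes> x \<otimes> inv a) ` A \<subseteq> A" using sub[OF a] .
  show "A \<subseteq> (\<lambda>x. a \<otimes> x \<otimes> inv a) ` A"
  proof
    fix y assume y: "y \<in> A"
    have ac: "a \<in> carrier G" using K a by (rule subgroup.mem_carrier)
    have "inv a \<otimes> y \<otimes> inv (inv a) \<in> A"
      using sub[OF subgroup.m_inv_closed[OF K a]] y by blast
    moreover have "y = a \<otimes> (inv a \<otimes> y \<otimes> inv (inv a)) \<otimes> inv a"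
      using ac y A by (auto simp: m_assoc)
    ultimately show "y \<in> (\<lambda>x. a \<otimes> x \<otimes> inv a) ` A" by blast
  qed
qed

lemma (in group) normalised_by_lreg_iff_conj_closed:
  assumes N: "N \<subseteq> Bij (carrier G)"
  shows "normalised_by_lreg G N \<longleftrightarrow>
    (\<forall>x\<in>carrier G. \<forall>\<eta>\<in>N.
       lreg G x \<otimes>\<^bsub>BijGroup (carrier G)\<^esub> \<eta> \<otimes>\<^bsub>BijGroup (carrier G)\<^esub> inv\<^bsub>BijGroup (carrier G)\<^esub> lreg G x \<in> N)"
    (is "_ \<longleftrightarrow> (\<forall>x\<in>carrier G. \<forall>\<eta>\<in>N. ?conj (lreg G x) \<eta> \<in> N)")
proof
  assume "normalised_by_lreg G N"
  then show "\<forall>x\<in>carrier G. \<forall>\<eta>\<in>N. ?conj (lreg G x) \<eta> \<in> N"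
    unfolding normalised_by_lreg_def by blast
next
  assume closed: "\<forall>x\<in>carrier G. \<forall>\<eta>\<in>N. ?conj (lreg G x) \<eta> \<in> N"
  have sub: "?conj a ` N \<subseteq> N" if "a \<in> lreg G ` carrier G" for a
    using closed that by blast
  show "normalised_by_lreg G N"
    unfolding normalised_by_lreg_def
  proof (intro ballI)
    fix x assume x: "x \<in> carrier G"
    show "?conj (lreg G x) ` N = N"
      by (rule group.conj_image_eq_if_subset[OF group_BijGroup
            group_hom.img_is_subgroup[OF group_hom_lreg] _ sub])
        (use x N in simp_all)
  qed
qed

section \<open>The twisted operation\<close>

locale group_endo = group G for G :: "'a monoid" (structure) +
  fixes \<psi> :: "'a \<Rightarrow> 'a"
  assumes endo: "\<psi> \<in> hom G G"
begin

sublocale endo: group_hom G G \<psi>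
  by (simp add: group_hom_def group_hom_axioms_def endo is_group)

definition circ :: "'a \<Rightarrow> 'a \<Rightarrow> 'a" where
  "circ g h = g \<otimes> inv (\<psi> g) \<otimes> h \<otimes> \<psi> g"

definition central_psi_commutators :: bool where
  "central_psi_commutators \<longleftrightarrow>
     (\<forall>g\<in>carrier G. \<forall>h\<in>carrier G. commutator (\<psi> (g \<otimes> inv (\<psi> g))) (\<psi> h) \<in> centre G)"

lemma circ_closed [simp]: "g \<in> carrier G \<Longrightarrow> h \<in> carrier G \<Longrightarrow> circ g h \<in> carrier G"
  by (simp add: circ_def)

lemma circ_one_right [simp]: "g \<in> carrier G \<Longrightarrow> circ g \<one> = g"
  by (simp add: circ_def m_assoc)

lemma circ_one_left [simp]: "h \<in> carrier G \<Longrightarrow> circ \<one> h = h"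
  by (simp add: circ_def)

lemma circ_cancel_left:
  "g \<in> carrier G \<Longrightarrow> h \<in> carrier G \<Longrightarrow> h' \<in> carrier G \<Longrightarrow> circ g h = circ g h' \<longleftrightarrow> h = h'"
  unfolding circ_def by (rule mult_cancel_both) auto

lemma circ_eq_conj_iff:
  assumes k: "k \<in> carrier G" and c: "c \<in> carrier G"
  shows "(\<forall>h\<in>carrier G. circ k h = k \<otimes> (inv c \<otimes> h \<otimes> c)) \<longleftrightarrow> \<psi> k \<otimes> inv c \<in> centre G"
proof -
  have "circ k h = k \<otimes> (inv c \<otimes> h \<otimes> c) \<longleftrightarrow> inv c \<otimes> h \<otimes> c = inv (\<psi> k) \<otimes> h \<otimes> \<psi> k"
    if h: "h \<in> carrier G" for h
    using k c h by (auto simp: circ_def m_assoc)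
  then show ?thesis using conj_eq_iff_centre[of c "\<psi> k"] k c by simp
qed

lemma circ_assoc_iff:
  assumes g: "g \<in> carrier G" and h: "h \<in> carrier G"
  shows "(\<forall>x\<in>carrier G. circ (circ g h) x = circ g (circ h x)) \<longleftrightarrow>
         commutator (\<psi> (g \<otimes> inv (\<psi> g))) (\<psi> h) \<in> centre G"
proof -
  have "circ g (circ h x) = circ g h \<otimes> (inv (\<psi> h \<otimes> \<psi> g) \<otimes> x \<otimes> (\<psi> h \<otimes> \<psi> g))"
    if x: "x \<in> carrier G" for x
    using g h x by (simp add: circ_def m_assoc inv_mult_group)
  moreover have "\<psi> (circ g h) \<otimes> inv (\<psi> h \<otimes> \<psi> g) = commutator (\<psi> (g \<otimes> inv (\<psi> g))) (\<psi> h)"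
    using g h by (simp add: circ_def commutator_def m_assoc inv_mult_group)
  ultimately show ?thesis
    using circ_eq_conj_iff[of "circ g h" "\<psi> h \<otimes> \<psi> g"] g h by simp
qed

lemma circ_assoc_iff_central:
  "(\<forall>g\<in>carrier G. \<forall>h\<in>carrier G. \<forall>x\<in>carrier G. circ (circ g h) x = circ g (circ h x))
   \<longleftrightarrow> central_psi_commutators"
  by (simp add: central_psi_commutators_def circ_assoc_iff)

lemma circ_assoc:
  "central_psi_commutators \<Longrightarrow> g \<in> carrier G \<Longrightarrow> h \<in> carrier G \<Longrightarrow> x \<in> carrier G \<Longrightarrow>
   circ (circ g h) x = circ g (circ h x)"
  using circ_assoc_iff_central by blast

definition circ_inv :: "'a \<Rightarrow> 'a" where
  "circ_inv g = \<psi> g \<otimes> inv g \<otimes> inv (\<psi> g)"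

lemma circ_inv_closed [simp]: "g \<in> carrier G \<Longrightarrow> circ_inv g \<in> carrier G"
  by (simp add: circ_inv_def)

lemma circ_circ_inv: "g \<in> carrier G \<Longrightarrow> circ g (circ_inv g) = \<one>"
  by (simp add: circ_def circ_inv_def m_assoc)

lemma circ_inv_circ_eq:
  assumes Q: central_psi_commutators and g: "g \<in> carrier G" and y: "y \<in> carrier G"
  shows "circ (circ_inv g) y = \<psi> g \<otimes> inv g \<otimes> y \<otimes> inv (\<psi> g)"
proof -
  have "circ g (circ (circ_inv g) y) = y"
    using g y by (simp add: circ_assoc[OF Q, symmetric] circ_circ_inv)
  also have "y = circ g (\<psi> g \<otimes> inv g \<otimes> y \<otimes> inv (\<psi> g))"
    using g y by (simp add: circ_def m_assoc)
  finally show ?thesis using g y by (simp add: circ_cancel_left)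
qed

lemma circ_inv_circ: "central_psi_commutators \<Longrightarrow> g \<in> carrier G \<Longrightarrow> circ (circ_inv g) g = \<one>"
  by (simp add: circ_inv_circ_eq m_assoc)

lemma circ_struct_simps [simp]:
  "carrier (circ_struct G \<psi> e) = carrier G"
  "\<one>\<^bsub>circ_struct G \<psi> e\<^esub> = e"
  "g \<otimes>\<^bsub>circ_struct G \<psi> e\<^esub> h = circ g h"
  by (simp_all add: circ_struct_def circ_def)

lemma group_circ_struct:
  assumes Q: central_psi_commutators
  shows "group (circ_struct G \<psi> \<one>)"
proof (rule groupI)
  fix g assume "g \<in> carrier (circ_struct G \<psi> \<one>)"
  then show "\<exists>g'\<in>carrier (circ_struct G \<psi> \<one>). g' \<otimes>\<^bsub>circ_struct G \<psi> \<one>\<^esub> g = \<one>\<^bsub>circ_struct G \<psi> \<one>\<^esub>"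
    using circ_inv_circ[OF Q] by (intro bexI[of _ "circ_inv g"]) auto
qed (auto simp: circ_assoc[OF Q])

lemma circ_struct_inv:
  "central_psi_commutators \<Longrightarrow> g \<in> carrier G \<Longrightarrow> inv\<^bsub>circ_struct G \<psi> \<one>\<^esub> g = circ_inv g"
  by (rule group.inv_equality[OF group_circ_struct]) (auto simp: circ_inv_circ)

lemma skew_brace_circ_struct:
  "group (circ_struct G \<psi> e) \<Longrightarrow> skew_brace G (circ_struct G \<psi> e)"
  unfolding skew_brace_def using is_group by (auto simp: circ_def m_assoc)

lemma mult_circ_distrib:
  assumes Q: central_psi_commutators
    and g: "g \<in> carrier G" and h: "h \<in> carrier G" and k: "k \<in> carrier G"
  shows "g \<otimes> circ h k = circ (circ (g \<otimes> h) (circ_inv g)) (g \<otimes> k)"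
proof -
  have "circ (circ (g \<otimes> h) (circ_inv g)) (g \<otimes> k) = circ (g \<otimes> h) (\<psi> g \<otimes> k \<otimes> inv (\<psi> g))"
    using g h k by (simp add: circ_assoc[OF Q] circ_inv_circ_eq[OF Q] m_assoc)
  also have "\<dots> = g \<otimes> circ h k"
    using g h k by (simp add: circ_def m_assoc inv_mult_group)
  finally show ?thesis by simp
qed

lemma bi_skew_brace_iff:
  "(\<exists>e. bi_skew_brace G (circ_struct G \<psi> e)) \<longleftrightarrow> central_psi_commutators"
proof
  assume "\<exists>e. bi_skew_brace G (circ_struct G \<psi> e)"
  then obtain e where "group (circ_struct G \<psi> e)"
    by (auto simp: bi_skew_brace_def skew_brace_def)
  then show central_psi_commutators
    using monoid.m_assoc[OF group.is_monoid] circ_assoc_iff_central by fastforce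
next
  assume Q: central_psi_commutators
  have "skew_brace (circ_struct G \<psi> \<one>) G"
    unfolding skew_brace_def using group_circ_struct[OF Q] is_group
    by (auto simp: circ_struct_inv[OF Q] mult_circ_distrib[OF Q])
  then show "\<exists>e. bi_skew_brace G (circ_struct G \<psi> e)"
    using skew_brace_circ_struct[OF group_circ_struct[OF Q]] by (auto simp: bi_skew_brace_def)
qed

lemma psi_comm_subset_central_commutators:
  assumes Q: central_psi_commutators
  shows "psi_comm G \<psi> \<subseteq> \<psi> -` {u \<in> carrier G. \<forall>v\<in>\<psi> ` carrier G. commutator u v \<in> centre G} \<inter> carrier G"
  unfolding psi_comm_def
proof (rule generate_subgroup_incl)
  show "subgroup (\<psi> -` {u \<in> carrier G. \<forall>v\<in>\<psi> ` carrier G. commutator u v \<in> centre G} \<inter> carrier G) G"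
    by (intro endo.subgroup_vimage central_commutators_subgroup) auto
  show "{g \<otimes> inv (\<psi> g) |g. g \<in> carrier G} \<subseteq>
        \<psi> -` {u \<in> carrier G. \<forall>v\<in>\<psi> ` carrier G. commutator u v \<in> centre G} \<inter> carrier G"
    using Q by (auto simp: central_psi_commutators_def)
qed

lemma psi_commutator_subgroup_central_iff:
  "\<psi> ` comm_subgroup G (psi_comm G \<psi>) (carrier G) \<subseteq> centre G \<longleftrightarrow> central_psi_commutators"
proof
  assume central: "\<psi> ` comm_subgroup G (psi_comm G \<psi>) (carrier G) \<subseteq> centre G"
  show central_psi_commutators
    unfolding central_psi_commutators_def
  proof (intro ballI)
    fix g h assume g: "g \<in> carrier G" and h: "h \<in> carrier G"
    have "g \<otimes> inv (\<psi> g) \<in> psi_comm G \<psi>"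
      unfolding psi_comm_def by (rule generate.incl) (use g in blast)
    then have "commutator (g \<otimes> inv (\<psi> g)) h \<in> comm_subgroup G (psi_comm G \<psi>) (carrier G)"
      unfolding comm_subgroup_def commutator_def by (intro generate.incl) (use h in blast)
    then show "commutator (\<psi> (g \<otimes> inv (\<psi> g))) (\<psi> h) \<in> centre G"
      using central g h by (force simp: commutator_def)
  qed
next
  assume Q: central_psi_commutators
  have "comm_subgroup G (psi_comm G \<psi>) (carrier G) \<subseteq> \<psi> -` centre G \<inter> carrier G"
    unfolding comm_subgroup_def
  proof (rule generate_subgroup_incl)
    show "subgroup (\<psi> -` centre G \<inter> carrier G) G"
      by (intro endo.subgroup_vimage centre_subgroup)
    show "{a \<otimes> b \<otimes> inv a \<otimes> inv b |a b. a \<in> psi_comm G \<psi> \<and> b \<in> carrier G} \<subseteq> \<psi> -` centre G \<inter> carrier G"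
      using psi_comm_subset_central_commutators[OF Q] by (force simp: commutator_def)
  qed
  then show "\<psi> ` comm_subgroup G (psi_comm G \<psi>) (carrier G) \<subseteq> centre G" by blast
qed

section \<open>The set N of permutations\<close>

lemma nu_eq: "nu G \<psi> g = (\<lambda>h\<in>carrier G. circ g h)"
  by (simp add: nu_def circ_def)

lemma nu_apply [simp]: "h \<in> carrier G \<Longrightarrow> nu G \<psi> g h = circ g h"
  by (simp add: nu_eq)

lemma nu_Bij: "g \<in> carrier G \<Longrightarrow> nu G \<psi> g \<in> Bij (carrier G)"
  unfolding nu_eq
  by (rule Bij_restrictI[where g = "\<lambda>y. \<psi> g \<otimes> inv g \<otimes> y \<otimes> inv (\<psi> g)"])
     (auto simp: circ_def m_assoc)

lemma restrict_mem_nu_image_iff: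
  assumes "F \<one> \<in> carrier G"
  shows "(\<lambda>h\<in>carrier G. F h) \<in> nu G \<psi> ` carrier G \<longleftrightarrow> (\<forall>h\<in>carrier G. F h = circ (F \<one>) h)"
proof
  assume "(\<lambda>h\<in>carrier G. F h) \<in> nu G \<psi> ` carrier G"
  then obtain k where k: "k \<in> carrier G" and F: "(\<lambda>h\<in>carrier G. F h) = (\<lambda>h\<in>carrier G. circ k h)"
    by (auto simp: nu_eq)
  have Fk: "F h = circ k h" if "h \<in> carrier G" for h
    using fun_cong[OF F, of h] that by simp
  have "F \<one> = k" using Fk[OF one_closed] k by simp
  then show "\<forall>h\<in>carrier G. F h = circ (F \<one>) h" using Fk by blast
next
  assume "\<forall>h\<in>carrier G. F h = circ (F \<one>) h"
  then have "(\<lambda>h\<in>carrier G. F h) = nu G \<psi> (F \<one>)"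
    unfolding nu_eq by (intro restrict_ext) blast
  then show "(\<lambda>h\<in>carrier G. F h) \<in> nu G \<psi> ` carrier G" using assms by blast
qed

lemma nu_mult:
  "g \<in> carrier G \<Longrightarrow> h \<in> carrier G \<Longrightarrow>
   nu G \<psi> g \<otimes>\<^bsub>BijGroup (carrier G)\<^esub> nu G \<psi> h = (\<lambda>x\<in>carrier G. circ g (circ h x))"
  by (simp add: BijGroup_mult_eq nu_Bij) (simp add: nu_eq cong: restrict_cong)

lemma nu_hom:
  assumes Q: central_psi_commutators
  shows "nu G \<psi> \<in> hom (circ_struct G \<psi> \<one>) (BijGroup (carrier G))"
proof (rule homI)
  fix g h assume "g \<in> carrier (circ_struct G \<psi> \<one>)" "h \<in> carrier (circ_struct G \<psi> \<one>)"
  then show "nu G \<psi> (g \<otimes>\<^bsub>circ_struct G \<psi> \<one>\<^esub> h) = nu G \<psi> g \<otimes>\<^bsub>BijGroup (carrier G)\<^esub> nu G \<psi> h"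
    by (simp add: nu_mult) (simp add: nu_eq circ_assoc[OF Q] cong: restrict_cong)
qed (simp add: BijGroup_def nu_Bij)

lemma subgroup_nu_image_iff:
  "subgroup (nu G \<psi> ` carrier G) (BijGroup (carrier G)) \<longleftrightarrow> central_psi_commutators"
proof
  assume N: "subgroup (nu G \<psi> ` carrier G) (BijGroup (carrier G))"
  have "\<forall>x\<in>carrier G. circ g (circ h x) = circ (circ g h) x"
    if g: "g \<in> carrier G" and h: "h \<in> carrier G" for g h
  proof -
    have "nu G \<psi> g \<otimes>\<^bsub>BijGroup (carrier G)\<^esub> nu G \<psi> h \<in> nu G \<psi> ` carrier G"
      using g h by (intro subgroup.m_closed[OF N]) auto
    then show ?thesis
      using g h restrict_mem_nu_image_iff[of "\<lambda>x. circ g (circ h x)"] by (simp add: nu_mult)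
  qed
  then show central_psi_commutators
    using circ_assoc_iff_central by simp
next
  assume Q: central_psi_commutators
  interpret nu: group_hom "circ_struct G \<psi> \<one>" "BijGroup (carrier G)" "nu G \<psi>"
    by (simp add: group_hom_def group_hom_axioms_def group_circ_struct[OF Q] group_BijGroup nu_hom[OF Q])
  show "subgroup (nu G \<psi> ` carrier G) (BijGroup (carrier G))"
    using nu.img_is_subgroup by simp
qed

lemma lreg_conj_nu:
  assumes x: "x \<in> carrier G" and g: "g \<in> carrier G"
  shows "lreg G x \<otimes>\<^bsub>BijGroup (carrier G)\<^esub> nu G \<psi> g \<otimes>\<^bsub>BijGroup (carrier G)\<^esub> inv\<^bsub>BijGroup (carrier G)\<^esub> lreg G x
       = (\<lambda>h\<in>carrier G. x \<otimes> circ g (inv x \<otimes> h))"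
proof -
  interpret lreg: group_hom G "BijGroup (carrier G)" "lreg G" by (rule group_hom_lreg)
  have xg: "lreg G x \<otimes>\<^bsub>BijGroup (carrier G)\<^esub> nu G \<psi> g = (\<lambda>h\<in>carrier G. x \<otimes> circ g h)"
    using x g by (simp add: BijGroup_mult_eq lreg_Bij nu_Bij) (simp add: lreg_def nu_eq cong: restrict_cong)
  have xg_Bij: "(\<lambda>h\<in>carrier G. x \<otimes> circ g h) \<in> Bij (carrier G)"
    using x g lreg.H.m_closed unfolding xg[symmetric] by (simp add: lreg_Bij nu_Bij)
  have "lreg G x \<otimes>\<^bsub>BijGroup (carrier G)\<^esub> nu G \<psi> g \<otimes>\<^bsub>BijGroup (carrier G)\<^esub> inv\<^bsub>BijGroup (carrier G)\<^esub> lreg G x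
      = (\<lambda>h\<in>carrier G. x \<otimes> circ g h) \<otimes>\<^bsub>BijGroup (carrier G)\<^esub> lreg G (inv x)"
    using x by (simp add: xg)
  also have "\<dots> = (\<lambda>h\<in>carrier G. x \<otimes> circ g (inv x \<otimes> h))"
    using x xg_Bij by (simp add: BijGroup_mult_eq lreg_Bij del: lreg.hom_inv)
      (simp add: lreg_def cong: restrict_cong)
  finally show ?thesis .
qed

lemma lreg_conj_nu_mem_iff:
  assumes x: "x \<in> carrier G" and g: "g \<in> carrier G"
  shows "lreg G x \<otimes>\<^bsub>BijGroup (carrier G)\<^esub> nu G \<psi> g \<otimes>\<^bsub>BijGroup (carrier G)\<^esub> inv\<^bsub>BijGroup (carrier G)\<^esub> lreg G x
           \<in> nu G \<psi> ` carrier G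
         \<longleftrightarrow> commutator (\<psi> (g \<otimes> inv (\<psi> g))) (\<psi> x) \<in> centre G"
proof -
  define k where "k = x \<otimes> circ g (inv x)"
  have k: "k \<in> carrier G" using x g by (simp add: k_def)
  have conj_form: "x \<otimes> circ g (inv x \<otimes> h) = k \<otimes> (inv (\<psi> g) \<otimes> h \<otimes> \<psi> g)"
    if "h \<in> carrier G" for h
    using x g that by (simp add: k_def circ_def m_assoc)
  have "lreg G x \<otimes>\<^bsub>BijGroup (carrier G)\<^esub> nu G \<psi> g \<otimes>\<^bsub>BijGroup (carrier G)\<^esub> inv\<^bsub>BijGroup (carrier G)\<^esub> lreg G x
          \<in> nu G \<psi> ` carrier G
        \<longleftrightarrow> (\<forall>h\<in>carrier G. x \<otimes> circ g (inv x \<otimes> h) = circ k h)"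
    using restrict_mem_nu_image_iff[of "\<lambda>h. x \<otimes> circ g (inv x \<otimes> h)"] x g
    by (simp add: lreg_conj_nu k_def)
  also have "\<dots> \<longleftrightarrow> (\<forall>h\<in>carrier G. circ k h = k \<otimes> (inv (\<psi> g) \<otimes> h \<otimes> \<psi> g))"
    using conj_form by (metis (no_types, lifting))
  also have "\<dots> \<longleftrightarrow> \<psi> k \<otimes> inv (\<psi> g) \<in> centre G"
    using k g by (simp add: circ_eq_conj_iff)
  also have "\<psi> k \<otimes> inv (\<psi> g) = commutator (\<psi> x) (\<psi> (g \<otimes> inv (\<psi> g)))"
    using x g by (simp add: k_def circ_def commutator_def m_assoc inv_mult_group)
  finally show ?thesis
    using commutator_in_centre_swap x g by simp
qed

lemma normalised_by_lreg_iff: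
  "normalised_by_lreg G (nu G \<psi> ` carrier G) \<longleftrightarrow> central_psi_commutators"
proof -
  have "nu G \<psi> ` carrier G \<subseteq> Bij (carrier G)" using nu_Bij by blast
  then show ?thesis
    by (auto simp: normalised_by_lreg_iff_conj_closed lreg_conj_nu_mem_iff
        central_psi_commutators_def)
qed

lemma regular_nu_image: "regular_perm G (nu G \<psi> ` carrier G)"
  unfolding regular_perm_def
proof (rule bij_betw_imageI)
  show "inj_on (\<lambda>\<eta>. \<eta> \<one>) (nu G \<psi> ` carrier G)"
    by (auto simp: inj_on_def)
  show "(\<lambda>\<eta>. \<eta> \<one>) ` nu G \<psi> ` carrier G = carrier G"
    by (simp add: image_image)
qed

lemma nu_conj_lreg:
  assumes g: "g \<in> carrier G" and z: "z \<in> carrier G"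
  shows "nu G \<psi> g \<otimes>\<^bsub>BijGroup (carrier G)\<^esub> lreg G z \<otimes>\<^bsub>BijGroup (carrier G)\<^esub> inv\<^bsub>BijGroup (carrier G)\<^esub> nu G \<psi> g
       = lreg G (circ g z \<otimes> inv g)"
proof -
  interpret Perm: group "BijGroup (carrier G)" by (rule group_BijGroup)
  have "nu G \<psi> g \<otimes>\<^bsub>BijGroup (carrier G)\<^esub> lreg G z = lreg G (circ g z \<otimes> inv g) \<otimes>\<^bsub>BijGroup (carrier G)\<^esub> nu G \<psi> g"
    using g z by (simp add: BijGroup_mult_eq nu_Bij lreg_Bij)
      (simp add: nu_eq lreg_def circ_def m_assoc cong: restrict_cong)
  then show ?thesis
    using g z by (subst Perm.inv_solve_right') (simp_all add: nu_Bij lreg_Bij Perm.m_closed[simplified])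
qed

lemma normalises_lreg_nu_image: "normalises_lreg G (nu G \<psi> ` carrier G)"
  unfolding normalises_lreg_def
proof (intro ballI)
  fix \<eta> assume "\<eta> \<in> nu G \<psi> ` carrier G"
  then obtain g where g: "g \<in> carrier G" and \<eta>: "\<eta> = nu G \<psi> g" by blast
  have "(\<lambda>z. circ g z \<otimes> inv g) ` carrier G = carrier G"
  proof
    show "(\<lambda>z. circ g z \<otimes> inv g) ` carrier G \<subseteq> carrier G" using g by auto
    show "carrier G \<subseteq> (\<lambda>z. circ g z \<otimes> inv g) ` carrier G"
    proof
      fix w assume w: "w \<in> carrier G"
      have "w = circ g (\<psi> g \<otimes> inv g \<otimes> w \<otimes> g \<otimes> inv (\<psi> g)) \<otimes> inv g"
        using g w by (simp add: circ_def m_assoc)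
      moreover have "\<psi> g \<otimes> inv g \<otimes> w \<otimes> g \<otimes> inv (\<psi> g) \<in> carrier G" using g w by simp
      ultimately show "w \<in> (\<lambda>z. circ g z \<otimes> inv g) ` carrier G" by (rule image_eqI)
    qed
  qed
  moreover have "(\<lambda>x. \<eta> \<otimes>\<^bsub>BijGroup (carrier G)\<^esub> x \<otimes>\<^bsub>BijGroup (carrier G)\<^esub> inv\<^bsub>BijGroup (carrier G)\<^esub> \<eta>)
      ` lreg G ` carrier G = lreg G ` (\<lambda>z. circ g z \<otimes> inv g) ` carrier G"
    unfolding \<eta> image_image using g by (intro image_cong) (simp_all add: nu_conj_lreg)
  ultimately show "(\<lambda>x. \<eta> \<otimes>\<^bsub>BijGroup (carrier G)\<^esub> x \<otimes>\<^bsub>BijGroup (carrier G)\<^esub> inv\<^bsub>BijGroup (carrier G)\<^esub> \<eta>)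
      ` lreg G ` carrier G = lreg G ` carrier G"
    by simp
qed

end

theorem theorem1p1:
  fixes G :: "'a monoid" and \<psi> :: "'a \<Rightarrow> 'a"
  assumes "group G" and "\<psi> \<in> hom G G"
  defines "N \<equiv> nu G \<psi> ` carrier G"
  shows
    "(subgroup N (BijGroup (carrier G)) \<longleftrightarrow> normalised_by_lreg G N)
   \<and> (normalised_by_lreg G N \<longleftrightarrow>
        (subgroup N (BijGroup (carrier G)) \<and> regular_perm G N
         \<and> normalises_lreg G N \<and> normalised_by_lreg G N))
   \<and> ((subgroup N (BijGroup (carrier G)) \<and> regular_perm G N
         \<and> normalises_lreg G N \<and> normalised_by_lreg G N) \<longleftrightarrow>
        \<psi> ` comm_subgroup G (psi_comm G \<psi>) (carrier G) \<subseteq> centre G)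
   \<and> (\<psi> ` comm_subgroup G (psi_comm G \<psi>) (carrier G) \<subseteq> centre G \<longleftrightarrow>
        (\<exists>e. bi_skew_brace G (circ_struct G \<psi> e)))"
proof -
  interpret group_endo G \<psi>
    using assms by (simp add: group_endo_def group_endo_axioms_def)
  show ?thesis
    unfolding N_def
    using subgroup_nu_image_iff normalised_by_lreg_iff psi_commutator_subgroup_central_iff
      bi_skew_brace_iff regular_nu_image normalises_lreg_nu_image
    by blast
qed

end
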